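(* Let $\mathcal{P}\subset K[x_1,\ldots,x_n]$ be a chordal polynomial set with $x_1<\cdots<x_n$ as a perfect elimination ordering. Let $\overline{\mathrm{red}}_n(\mathcal{P}),\ldots,\overline{\mathrm{red}}_1(\mathcal{P})$ be any successive reduction of $\mathcal{P}$, with arbitrary valid reduction data at each step. Then for each $i\in\{n,\ldots,1\}$ and any two distinct variables $x_p,x_q$ the following holds: if there is an integer $k$ with $x_p,x_q\in\mathrm{supp}\big(\overline{\mathrm{red}}_i(\mathcal{P})^{(k)}\big)$, then $\{x_p,x_q\}$ is an edge of $G(\mathcal{P})$.
   Context: Let $K$ be a field and $K[x_1,\ldots,x_n]$ the polynomial ring, with the variables ordered $x_1<\cdots<x_n$. For a polynomial $F$, $\mathrm{supp}(F)$ is the set of variables effectively appearing in $F$. For a set of polynomials $\mathcal{P}$, $\mathrm{supp}(\mathcal{P})=\bigcup_{F\in\mathcal{P}}\mathrm{supp}(F)$. For a nonconstant $F$, $\mathrm{lv}(F)$ is the greatest variable in $\mathrm{supp}(F)$. For a polynomial set $\mathcal{P}$ and $1\le i\le n$, $\mathcal{P}^{(i)}=\{P\in\mathcal{P}:\mathrm{lv}(P)=x_i\}$; constants belong to no $\mathcal{P}^{(i)}$. The associated graph $G(\mathcal{P})$ is the undirected graph whose vertex set is $\mathrm{supp}(\mathcal{P})$, with an edge between distinct $x_i,x_j$ iff some $F\in\mathcal{P}$ has $x_i,x_j\in\mathrm{supp}(F)$. An ordering of the vertices of a graph is a perfect elimination ordering if, for every vertex $v$, the set consisting of $v$ and all neighbours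 of $v$ smaller than $v$ is a clique. A polynomial set $\mathcal{P}$ is called chordal with $x_1<\cdots<x_n$ as a perfect elimination ordering if the restriction of this ordering to $\mathrm{supp}(\mathcal{P})$ is a perfect elimination ordering of $G(\mathcal{P})$. Reduction step: let $\mathcal{S}$ be a polynomial set and $1\le i\le n$ with $\mathcal{S}^{(i)}\neq\emptyset$. Reduction data for $(\mathcal{S},i)$ is a pair $(T_i,\mathcal{R}_i)$ such that: - $T_i\in K[x_1,\ldots,x_i]\setminus K[x_1,\ldots,x_{i-1}]$ and $\mathcal{R}_i\subset K[x_1,\ldots,x_{i-1}]$, where $K[x_1,\ldots,x_0]=K$; - $\mathrm{supp}(T_i)\subseteq\mathrm{supp}(\mathcal{S}^{(i)})$ and $\mathrm{supp}(\mathcal{R}_i)\subseteq\mathrm{supp}(\mathcal{S}^{(i)})$. Given such a pair, $$\mathrm{red}_i(\mathcal{S})=\bigcup_{j>i}\mathcal{S}^{(j)}\ \cup\ \{T_i\}\ \cup\ \bigcup_{j<i}\big(\mathcal{S}^{(j)}\cup\mathcal{R}_i^{(j)}\big).$$ If $\mathcal{S}^{(i)}=\emptyset$, set $\mathrm{red}_i(\mathcal{S})=\bigcup_{j}\mathcal{S}^{(j)}$. Successive reduction: $\overline{\mathrm{red}}_{n+1}(\mathcal{P})=\mathcal{P}$ and $\overline{\mathrm{red}}_i(\mathcal{P})=\mathrm{red}_i(\overline{\mathrm{red}}_{i+1}(\mathcal{P}))$ for $i=n,\ldots,1$. At each step some reduction data for $(\overline{\mathrm{red}}_{i+1}(\mathcal{P}),i)$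 is chosen. *)

theory Defs
  imports "HOL-Library.Poly_Mapping"
begin

text \<open>Multivariate polynomials over K: finitely supported maps from monomials
(finitely supported exponent vectors, variable x_i is index i) to coefficients.\<close>
type_synonym 'a mpoly = "(nat \<Rightarrow>\<^sub>0 nat) \<Rightarrow>\<^sub>0 'a"

definition vars :: "('a::zero) mpoly \<Rightarrow> nat set" where
  "vars F = (\<Union>m\<in>Poly_Mapping.keys F. Poly_Mapping.keys m)"

definition supp_set :: "('a::zero) mpoly set \<Rightarrow> nat set" where
  "supp_set P = (\<Union>F\<in>P. vars F)"

definition lv :: "('a::zero) mpoly \<Rightarrow> nat" where
  "lv F = Max (vars F)"

definition level :: "('a::zero) mpoly set \<Rightarrow> nat \<Rightarrow> 'a mpoly set" where
  "level P i = {F \<in> P. vars F \<noteq> {} \<and> lv F = i}"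

definition graph_edge :: "('a::zero) mpoly set \<Rightarrow> nat \<Rightarrow> nat \<Rightarrow> bool" where
  "graph_edge P p q \<longleftrightarrow> p \<noteq> q \<and> (\<exists>F\<in>P. p \<in> vars F \<and> q \<in> vars F)"

text \<open>Perfect elimination ordering (natural order on variable indices) of G(P).\<close>
definition chordal :: "('a::zero) mpoly set \<Rightarrow> bool" where
  "chordal P \<longleftrightarrow> (\<forall>v\<in>supp_set P.
     (\<forall>a\<in>insert v {u. graph_edge P u v \<and> u < v}.
       \<forall>b\<in>insert v {u. graph_edge P u v \<and> u < v}.
         a \<noteq> b \<longrightarrow> graph_edge P a b))"

definition reduction_data :: "('a::zero) mpoly set \<Rightarrow> nat \<Rightarrow> 'a mpoly \<Rightarrow> 'a mpoly set \<Rightarrow> bool" where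
  "reduction_data S i T R \<longleftrightarrow>
     vars T \<subseteq> {1..i} \<and> i \<in> vars T \<and>
     (\<forall>F\<in>R. vars F \<subseteq> {1..<i}) \<and>
     vars T \<subseteq> supp_set (level S i) \<and>
     supp_set R \<subseteq> supp_set (level S i)"

definition red :: "nat \<Rightarrow> ('a::zero) mpoly set \<Rightarrow> nat \<Rightarrow> 'a mpoly \<Rightarrow> 'a mpoly set \<Rightarrow> 'a mpoly set" where
  "red n S i T R =
     (if level S i = {} then (\<Union>j\<in>{1..n}. level S j)
      else (\<Union>j\<in>{i<..n}. level S j) \<union> {T} \<union> (\<Union>j\<in>{1..<i}. level S j \<union> level R j))"

end

theory Submission
  imports Defs
begin

text \<open>Every polynomial F of \<open>P\<close> has its variables inside the clique of x_lv(F) and its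
smaller neighbours in G(P); chordality makes these sets cliques. This property is preserved by
each reduction step: \<open>T\<^sub>i\<close> lives in the clique of x_i, and every variable of a polynomial of
\<open>R\<^sub>i\<close> lies in the clique of x_i and below its own leading variable, which is itself a smaller
neighbour of x_i, so again the clique property places it in the right set.\<close>

definition elim_clique :: "('a::zero) mpoly set \<Rightarrow> nat \<Rightarrow> nat set" where
  "elim_clique P k = {u. (u = k \<and> k \<in> supp_set P) \<or> (graph_edge P u k \<and> u < k)}"

definition vars_in_elim_cliques :: "('a::zero) mpoly set \<Rightarrow> 'a mpoly set \<Rightarrow> bool" where
  "vars_in_elim_cliques P X \<longleftrightarrow> (\<forall>F\<in>X. vars F \<noteq> {} \<longrightarrow> vars F \<subseteq> elim_clique P (lv F))"

lemma finite_vars: "finite (vars F)"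
  unfolding vars_def by auto

lemma lv_in_vars: "vars F \<noteq> {} \<Longrightarrow> lv F \<in> vars F"
  unfolding lv_def using finite_vars Max_in by blast

lemma le_lv: "u \<in> vars F \<Longrightarrow> u \<le> lv F"
  unfolding lv_def using finite_vars Max_ge by blast

lemma lv_eqI: "i \<in> vars F \<Longrightarrow> vars F \<subseteq> {..i} \<Longrightarrow> lv F = i"
  using lv_in_vars le_lv by (metis atMost_iff empty_iff le_antisym subsetD)

lemma graph_edge_in_supp_set: "graph_edge P u k \<Longrightarrow> u \<in> supp_set P \<and> k \<in> supp_set P"
  unfolding graph_edge_def supp_set_def by auto

lemma elim_clique_is_clique:
  assumes "chordal P" "p \<in> elim_clique P k" "q \<in> elim_clique P k" "p \<noteq> q"
  shows "graph_edge P p q"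
proof -
  have "k \<in> supp_set P"
    using assms(2) graph_edge_in_supp_set unfolding elim_clique_def by auto
  moreover have "p \<in> insert k {u. graph_edge P u k \<and> u < k}"
    and "q \<in> insert k {u. graph_edge P u k \<and> u < k}"
    using assms(2,3) unfolding elim_clique_def by auto
  ultimately show ?thesis using assms(1,4) unfolding chordal_def by blast
qed

lemma vars_in_elim_cliques_self: "vars_in_elim_cliques P P"
  unfolding vars_in_elim_cliques_def
proof (intro ballI impI subsetI)
  fix F u assume F: "F \<in> P" "vars F \<noteq> {}" and u: "u \<in> vars F"
  have lv: "lv F \<in> vars F" using lv_in_vars F(2) .
  then have "lv F \<in> supp_set P" using F(1) unfolding supp_set_def by auto
  moreover have "u \<noteq> lv F \<Longrightarrow> graph_edge P u (lv F)"
    using F(1) lv u unfolding graph_edge_def by auto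
  ultimately show "u \<in> elim_clique P (lv F)"
    using le_lv[OF u] unfolding elim_clique_def by (cases "u = lv F") auto
qed

lemma supp_set_level_subset_elim_clique:
  "vars_in_elim_cliques P X \<Longrightarrow> supp_set (level X k) \<subseteq> elim_clique P k"
  unfolding vars_in_elim_cliques_def supp_set_def level_def by auto

lemma vars_in_elim_clique_below:
  assumes chord: "chordal P" and sub: "vars F \<subseteq> elim_clique P i"
    and below: "vars F \<subseteq> {..<i}" and nonconst: "vars F \<noteq> {}"
  shows "vars F \<subseteq> elim_clique P (lv F)"
proof
  fix u assume u: "u \<in> vars F"
  have lv: "lv F \<in> vars F" using lv_in_vars nonconst .
  then have lv_clique: "lv F \<in> elim_clique P i" and "lv F < i" using sub below by auto
  then have "graph_edge P (lv F) i" unfolding elim_clique_def by auto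
  then have "lv F \<in> supp_set P" using graph_edge_in_supp_set by blast
  moreover have "u \<noteq> lv F \<Longrightarrow> graph_edge P u (lv F)"
    using elim_clique_is_clique[OF chord _ lv_clique] u sub by auto
  ultimately show "u \<in> elim_clique P (lv F)"
    using le_lv[OF u] unfolding elim_clique_def by (cases "u = lv F") auto
qed

lemma vars_in_elim_cliques_red:
  assumes chord: "chordal P" and inv: "vars_in_elim_cliques P S"
    and data: "level S i \<noteq> {} \<longrightarrow> reduction_data S i T R"
  shows "vars_in_elim_cliques P (red n S i T R)"
proof (cases "level S i = {}")
  case True
  then show ?thesis
    using inv unfolding red_def vars_in_elim_cliques_def level_def by auto
next
  case False
  then have rd: "reduction_data S i T R" using data by blast
  have sub: "supp_set (level S i) \<subseteq> elim_clique P i"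
    using supp_set_level_subset_elim_clique[OF inv] .
  have "lv T = i"
    using rd by (intro lv_eqI) (auto simp: reduction_data_def)
  then have T: "vars T \<subseteq> elim_clique P (lv T)"
    using rd sub unfolding reduction_data_def by auto
  have "vars F \<subseteq> elim_clique P (lv F)" if "F \<in> R" "vars F \<noteq> {}" for F
  proof (rule vars_in_elim_clique_below[OF chord _ _ that(2)])
    show "vars F \<subseteq> elim_clique P i"
      using rd that(1) sub unfolding reduction_data_def supp_set_def by blast
    show "vars F \<subseteq> {..<i}"
      using rd that(1) unfolding reduction_data_def by fastforce
  qed
  with False inv T show ?thesis
    unfolding red_def vars_in_elim_cliques_def level_def by auto
qed

lemma vars_in_elim_cliques_successive_red:
  assumes chord: "chordal P" and start: "S (Suc n) = P"
    and step: "\<forall>i\<in>{1..n}. S i = red n (S (Suc i)) i (T i) (R i)"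
    and data: "\<forall>i\<in>{1..n}. level (S (Suc i)) i \<noteq> {} \<longrightarrow>
                   reduction_data (S (Suc i)) i (T i) (R i)"
    and i: "1 \<le> i" "i \<le> Suc n"
  shows "vars_in_elim_cliques P (S i)"
  using i(2,1)
proof (induction i rule: inc_induct)
  case base
  then show ?case using start vars_in_elim_cliques_self by simp
next
  case (step i)
  then show ?case
    using assms(3,4) vars_in_elim_cliques_red[OF chord] by simp
qed

theorem lemma3p4:
  fixes P :: "('a::field) mpoly set" and n :: nat
    and S :: "nat \<Rightarrow> 'a mpoly set"
    and T :: "nat \<Rightarrow> 'a mpoly" and R :: "nat \<Rightarrow> 'a mpoly set"
  assumes inK: "\<forall>F\<in>P. vars F \<subseteq> {1..n}"
    and chord: "chordal P"
    and start: "S (Suc n) = P"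
    and step: "\<forall>i\<in>{1..n}. S i = red n (S (Suc i)) i (T i) (R i)"
    and data: "\<forall>i\<in>{1..n}. level (S (Suc i)) i \<noteq> {} \<longrightarrow>
                   reduction_data (S (Suc i)) i (T i) (R i)"
  shows "\<forall>i\<in>{1..n}. \<forall>p q. \<forall>k\<in>{1..n}.
           p \<noteq> q \<and> p \<in> supp_set (level (S i) k) \<and> q \<in> supp_set (level (S i) k)
           \<longrightarrow> graph_edge P p q"
proof (intro ballI allI impI)
  fix i p q k assume i: "i \<in> {1..n}"
    and pq: "p \<noteq> q \<and> p \<in> supp_set (level (S i) k) \<and> q \<in> supp_set (level (S i) k)"
  have "vars_in_elim_cliques P (S i)"
    using vars_in_elim_cliques_successive_red[OF chord start step data] i by simp
  then have "supp_set (level (S i) k) \<subseteq> elim_clique P k"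
    by (rule supp_set_level_subset_elim_clique)
  then show "graph_edge P p q" using elim_clique_is_clique[OF chord] pq by blast
qed

end
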